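(* Let $f(1),f(2),\dots$ be a non-negative, non-decreasing sequence of real numbers with $f(1)=0$. Define $$a(n):=n\sum_{i=1}^{n}\frac{f(i)}{i^2}\qquad(n\ge 1).$$ Then $a(n+m)\le a(n)+a(m)+f(n+m)$ for all integers $n,m\ge 1$. *)

theory Defs
  imports Complex_Main
begin

text \<open>a(n) = n * sum_{i=1}^n f(i)/i^2; f is indexed by positive naturals (value at 0 unused).\<close>
definition a_seq :: "(nat \<Rightarrow> real) \<Rightarrow> nat \<Rightarrow> real" where
  "a_seq f n = real n * (\<Sum>i=1..n. f i / (real i)^2)"

end

theory Submission
  imports Defs
begin

text \<open>Split a(n+m) = n S(n+m) + m S(n+m), where S is the partial sum defining a, and
  cut S(n+m) after n terms in the first summand and after m terms in the second. The
  tails are bounded by f(n+m) times the telescoping majorant of the inverse squares,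
  \<open>\<Sum>i=k+1..k+d. 1/i\<^sup>2 \<le> 1/k - 1/(k+d)\<close>, and the two resulting weights
  \<open>n (1/n - 1/(n+m)) = m/(n+m)\<close> and \<open>m (1/m - 1/(n+m)) = n/(n+m)\<close> add up to 1.\<close>

lemma inverse_square_le_diff_inverse:
  fixes x :: real
  assumes "x > 0"
  shows "1 / (x + 1)\<^sup>2 \<le> 1 / x - 1 / (x + 1)"
proof -
  have "1 / x - 1 / (x + 1) = 1 / (x * (x + 1))"
    using assms by (simp add: field_simps)
  moreover have "x * (x + 1) \<le> (x + 1)\<^sup>2"
    using assms by (simp add: power2_eq_square mult_right_mono)
  ultimately show ?thesis
    using assms by (simp add: frac_le)
qed

lemma sum_inverse_squares_le:
  assumes "k \<ge> 1"
  shows "(\<Sum>i=k+1..k+d. 1 / (real i)\<^sup>2) \<le> 1 / real k - 1 / real (k + d)"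
proof (induction d)
  case 0
  then show ?case by simp
next
  case (Suc d)
  have "(\<Sum>i=k+1..k+Suc d. 1 / (real i)\<^sup>2)
      = (\<Sum>i=k+1..k+d. 1 / (real i)\<^sup>2) + 1 / (real (k + d) + 1)\<^sup>2"
    by simp
  also have "\<dots> \<le> (1 / real k - 1 / real (k + d)) + (1 / real (k + d) - 1 / (real (k + d) + 1))"
    using Suc.IH inverse_square_le_diff_inverse[of "real (k + d)"] assms
    by (intro add_mono) auto
  also have "\<dots> = 1 / real k - 1 / real (k + Suc d)"
    by simp
  finally show ?case .
qed

lemma sum_div_squares_le:
  fixes f :: "nat \<Rightarrow> real"
  assumes "k \<ge> 1"
    and bound: "\<And>i. k < i \<Longrightarrow> i \<le> k + d \<Longrightarrow> f i \<le> c"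
    and "c \<ge> 0"
  shows "(\<Sum>i=k+1..k+d. f i / (real i)\<^sup>2) \<le> c * (1 / real k - 1 / real (k + d))"
proof -
  have "(\<Sum>i=k+1..k+d. f i / (real i)\<^sup>2) \<le> (\<Sum>i=k+1..k+d. c * (1 / (real i)\<^sup>2))"
    using bound by (intro sum_mono) (simp add: divide_right_mono)
  also have "\<dots> = c * (\<Sum>i=k+1..k+d. 1 / (real i)\<^sup>2)"
    by (simp add: sum_distrib_left)
  also have "\<dots> \<le> c * (1 / real k - 1 / real (k + d))"
    using sum_inverse_squares_le[OF \<open>k \<ge> 1\<close>] \<open>c \<ge> 0\<close> by (rule mult_left_mono)
  finally show ?thesis .
qed

lemma a_seq_add_split:
  "a_seq f (n + m) = a_seq f n + a_seq f m
     + real n * (\<Sum>i=n+1..n+m. f i / (real i)\<^sup>2) + real m * (\<Sum>i=m+1..m+n. f i / (real i)\<^sup>2)"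
proof -
  let ?S = "\<lambda>A. \<Sum>i\<in>A. f i / (real i)\<^sup>2"
  have split_n: "?S {1..n+m} = ?S {1..n} + ?S {n+1..n+m}"
    by (rule sum.ub_add_nat) simp
  have split_m: "?S {1..n+m} = ?S {1..m} + ?S {m+1..m+n}"
    unfolding add.commute[of n m] by (rule sum.ub_add_nat) simp
  have "a_seq f (n + m) = real n * ?S {1..n+m} + real m * ?S {1..n+m}"
    by (simp add: a_seq_def distrib_right)
  also have "\<dots> = real n * (?S {1..n} + ?S {n+1..n+m}) + real m * (?S {1..m} + ?S {m+1..m+n})"
    using split_n split_m by simp
  finally show ?thesis
    by (simp add: a_seq_def distrib_left)
qed

lemma weights_sum_to_one:
  fixes x y :: real
  assumes "x > 0" "y > 0"
  shows "x * (1 / x - 1 / (x + y)) + y * (1 / y - 1 / (x + y)) = 1"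
proof -
  have "x * (1 / x - 1 / (x + y)) = 1 - x / (x + y)" "y * (1 / y - 1 / (x + y)) = 1 - y / (x + y)"
    using assms by (simp_all add: right_diff_distrib)
  moreover have "x / (x + y) + y / (x + y) = 1"
    using assms by (simp add: add_divide_distrib[symmetric])
  ultimately show ?thesis by linarith
qed

theorem claim6p1:
  fixes f :: "nat \<Rightarrow> real" and n m :: nat
  assumes nonneg: "\<And>i. i \<ge> 1 \<Longrightarrow> f i \<ge> 0"
    and mono: "\<And>i j. 1 \<le> i \<Longrightarrow> i \<le> j \<Longrightarrow> f i \<le> f j"
    and f1: "f 1 = 0"
    and n: "n \<ge> 1" and m: "m \<ge> 1"
  shows "a_seq f (n + m) \<le> a_seq f n + a_seq f m + f (n + m)"
proof -
  let ?c = "f (n + m)"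
  have c: "?c \<ge> 0" using nonneg n by simp
  have bound: "f i \<le> ?c" if "k < i" "i \<le> n + m" for i k :: nat
    using mono[of i "n + m"] that by simp
  have tail_n: "(\<Sum>i=n+1..n+m. f i / (real i)\<^sup>2) \<le> ?c * (1 / real n - 1 / real (n + m))"
    using sum_div_squares_le[OF n bound c] by simp
  have tail_m: "(\<Sum>i=m+1..m+n. f i / (real i)\<^sup>2) \<le> ?c * (1 / real m - 1 / real (n + m))"
    using sum_div_squares_le[OF m, of n f ?c] bound c by (simp add: add.commute)
  have "a_seq f (n + m) \<le> a_seq f n + a_seq f m
      + real n * (?c * (1 / real n - 1 / real (n + m))) + real m * (?c * (1 / real m - 1 / real (n + m)))"
    unfolding a_seq_add_split using tail_n tail_m by (intro add_mono mult_left_mono) auto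
  also have "\<dots> = a_seq f n + a_seq f m
      + ?c * (real n * (1 / real n - 1 / real (n + m)) + real m * (1 / real m - 1 / real (n + m)))"
    by (simp add: algebra_simps)
  also have "\<dots> = a_seq f n + a_seq f m + ?c"
    using weights_sum_to_one[of "real n" "real m"] n m by simp
  finally show ?thesis .
qed

end
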